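(* Let $X$ be an infinite set, $k>0$ an integer, and $\{(x^0_n,\dots,x^{k-1}_n):n\in\omega\}$ a sequence in $([X]^{<\omega})^k$. Then there exist: elements $d_0,\dots,d_{k-1}\in[X]^{<\omega}$; a strictly increasing sequence $(n_l)_{l\in\omega}$ in $\omega$; an integer $t$ with $0\le t\le k$ and a sequence $\{(y^0_{n_l},\dots,y^{t-1}_{n_l}):l\in\omega\}$ in $([X]^{<\omega})^t$; and for each $0\le s<k$ a function $P_s:t\to 2$, such that (i) $x^s_{n_l}=\Big(\sum_{i=0}^{t-1}P_s(i)\,y^i_{n_l}\Big)\triangle d_s$ for every $l\in\omega$ and $0\le s<k$ (where for $t=0$ this reads $x^s_{n_l}=d_s$); (ii) the family $\{y^i_{n_l}: l\in\omega,\ 0\le i<t\}$ is linearly independent.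
   Context: $[X]^{<\omega}$ is the set of finite subsets of $X$, regarded as a vector space over the field $2=\{0,1\}$ with symmetric difference $\triangle$ as addition; sums $\sum P(i)y^i$ are taken in this vector space. Linear independence is over $2$, for the indexed family (so members are pairwise distinct). *)

theory Defs
  imports Main
begin

text \<open>Symmetric difference: addition in the vector space of finite subsets over the field 2.\<close>
definition symdiff :: "'a set \<Rightarrow> 'a set \<Rightarrow> 'a set" where
  "symdiff A B = (A - B) \<union> (B - A)"

definition sd_sum :: "('i \<Rightarrow> 'a set) \<Rightarrow> 'i set \<Rightarrow> 'a set" where
  "sd_sum f I = Finite_Set.fold (\<lambda>i acc. symdiff acc (f i)) {} I"

definition gf2_lin_indep :: "('i \<Rightarrow> 'a set) \<Rightarrow> 'i set \<Rightarrow> bool" where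
  "gf2_lin_indep f I \<longleftrightarrow> inj_on f I \<and>
     (\<forall>F. F \<subseteq> I \<and> finite F \<and> F \<noteq> {} \<longrightarrow> sd_sum f F \<noteq> {})"

end

theory Submission imports Defs begin

text \<open>Write \<open>z C n\<close> for the sum of \<open>x n s\<close> over \<open>s \<in> C\<close>; it is additive in \<open>C\<close>.
  Pass to an infinite set \<open>N\<close> on which as many \<open>z C\<close> as possible are constant; every other
  \<open>z C\<close> is then finite-to-one on \<open>N\<close>. Let \<open>S\<close> be a largest set such that \<open>z T\<close> is constant
  on \<open>N\<close> for no nonempty \<open>T \<subseteq> S\<close>; by maximality, on \<open>N\<close> each \<open>x n s\<close> equals
  \<open>z (T s) n\<close> up to a constant \<open>d s\<close>, for some \<open>T s \<subseteq> S\<close>. Finally pick \<open>n\<^sub>0 < n\<^sub>1 < \<dots>\<close>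
  in \<open>N\<close> such that no nonempty sum within the row \<open>(x n\<^sub>l s)\<^sub>s\<^sub>\<in>\<^sub>S\<close> lies in the finite span
  of the earlier rows: those sums are finite-to-one, so this is possible, and it makes
  all rows together independent.\<close>

lemma symdiff_commute: "symdiff A B = symdiff B A"
  by (auto simp: symdiff_def)

lemma symdiff_eq_empty_iff: "symdiff A B = {} \<longleftrightarrow> A = B"
  by (auto simp: symdiff_def)

lemma symdiff_empty [simp]: "symdiff A {} = A" "symdiff {} A = A"
  by (auto simp: symdiff_def)

interpretation symdiff_sum: comm_monoid_set symdiff "{}"
  by unfold_locales (auto simp: symdiff_def)

lemma sd_sum_conv_F: "sd_sum f A = symdiff_sum.F f A"
  unfolding sd_sum_def symdiff_sum.eq_fold
  by (rule arg_cong[where f = "\<lambda>h. Finite_Set.fold h {} A"]) (auto simp: fun_eq_iff symdiff_commute)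

lemma sd_sum_symdiff:
  assumes "finite C" "finite D"
  shows "sd_sum f (symdiff C D) = symdiff (sd_sum f C) (sd_sum f D)"
proof -
  let ?F = "symdiff_sum.F f"
  have C: "C = (C - D) \<union> (C \<inter> D)" and D: "D = (D - C) \<union> (C \<inter> D)"
    by auto
  have "?F C = symdiff (?F (C - D)) (?F (C \<inter> D))"
    by (subst C, rule symdiff_sum.union_disjoint) (use assms in auto)
  moreover have "?F D = symdiff (?F (D - C)) (?F (C \<inter> D))"
    by (subst D, rule symdiff_sum.union_disjoint) (use assms in auto)
  moreover have "?F (symdiff C D) = symdiff (?F (C - D)) (?F (D - C))"
    unfolding symdiff_def[of C D] using assms by (intro symdiff_sum.union_disjoint) auto
  ultimately show ?thesis
    unfolding sd_sum_conv_F by (auto simp: symdiff_def)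
qed

lemma sd_sum_finite_subset:
  assumes "\<And>i. i \<in> A \<Longrightarrow> finite (f i) \<and> f i \<subseteq> X"
  shows "finite (sd_sum f A) \<and> sd_sum f A \<subseteq> X"
proof (cases "finite A")
  case True
  then show ?thesis using assms unfolding sd_sum_conv_F
    by (induction A rule: finite_induct) (auto simp: symdiff_def)
qed (simp add: sd_sum_conv_F)

lemma sd_sum_reindex_bij_filter:
  assumes "bij_betw e I S" "T \<subseteq> S" "finite I"
  shows "sd_sum (\<lambda>i. if e i \<in> T then f (e i) else {}) I = sd_sum f T"
proof -
  have "bij_betw e {i \<in> I. e i \<in> T} T"
    using assms(1,2) by (auto simp: bij_betw_def inj_on_def image_iff)
  then show ?thesis
    unfolding sd_sum_conv_F symdiff_sum.inter_filter[OF assms(3), symmetric]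
    by (rule symdiff_sum.reindex_bij_betw)
qed

definition sd_span :: "('i \<Rightarrow> 'a set) \<Rightarrow> 'i set \<Rightarrow> 'a set set" where
  "sd_span f I = (\<lambda>G. sd_sum f G) ` Pow I"

lemma finite_sd_span: "finite I \<Longrightarrow> finite (sd_span f I)"
  by (simp add: sd_span_def)

lemma sd_span_reindex_subset:
  assumes "inj_on h A" "h ` A \<subseteq> B"
  shows "sd_span (f \<circ> h) A \<subseteq> sd_span f B"
proof
  fix u assume "u \<in> sd_span (f \<circ> h) A"
  then obtain G where "G \<subseteq> A" "u = symdiff_sum.F (f \<circ> h) G"
    by (auto simp: sd_span_def sd_sum_conv_F)
  moreover have "symdiff_sum.F (f \<circ> h) G = symdiff_sum.F f (h ` G)"
    using assms(1) \<open>G \<subseteq> A\<close> by (simp add: symdiff_sum.reindex inj_on_subset)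
  moreover have "h ` G \<in> Pow B"
    using assms(2) \<open>G \<subseteq> A\<close> by auto
  ultimately show "u \<in> sd_span f B"
    by (simp add: sd_span_def sd_sum_conv_F)
qed

lemma gf2_lin_indep_iff_sums:
  "gf2_lin_indep f I \<longleftrightarrow> (\<forall>F \<subseteq> I. finite F \<longrightarrow> F \<noteq> {} \<longrightarrow> sd_sum f F \<noteq> {})"
proof -
  have "inj_on f I" if sums: "\<forall>F \<subseteq> I. finite F \<longrightarrow> F \<noteq> {} \<longrightarrow> sd_sum f F \<noteq> {}"
  proof (rule inj_onI, rule ccontr)
    fix a b assume "a \<in> I" "b \<in> I" "f a = f b" "a \<noteq> b"
    then have "sd_sum f {a, b} = {}"
      by (simp add: sd_sum_conv_F symdiff_eq_empty_iff)
    with sums \<open>a \<in> I\<close> \<open>b \<in> I\<close> show False by auto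
  qed
  then show ?thesis unfolding gf2_lin_indep_def by blast
qed

lemma gf2_lin_indep_reindex:
  assumes "inj_on h A" "gf2_lin_indep f (h ` A)"
  shows "gf2_lin_indep (f \<circ> h) A"
  unfolding gf2_lin_indep_iff_sums
proof (intro allI impI)
  fix F assume "F \<subseteq> A" "finite F" "F \<noteq> {}"
  then have "sd_sum f (h ` F) \<noteq> {}"
    using assms(2) unfolding gf2_lin_indep_iff_sums by (simp add: image_mono)
  moreover have "sd_sum (f \<circ> h) F = sd_sum f (h ` F)"
    using assms(1) \<open>F \<subseteq> A\<close> by (simp add: sd_sum_conv_F symdiff_sum.reindex inj_on_subset)
  ultimately show "sd_sum (f \<circ> h) F \<noteq> {}"
    by simp
qed

lemma gf2_lin_indep_bij_columns:
  assumes "bij_betw e J S" "gf2_lin_indep (\<lambda>(l, s). Y l s) (UNIV \<times> S)"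
  shows "gf2_lin_indep (\<lambda>(l, j). Y l (e j)) (UNIV \<times> J)"
proof -
  have "map_prod id e ` (UNIV \<times> J) = UNIV \<times> S"
    using assms(1) unfolding bij_betw_def by (intro map_prod_surj_on) simp_all
  moreover have "inj_on (map_prod id e) (UNIV \<times> J)"
    using assms(1) unfolding bij_betw_def by (intro map_prod_inj_on) simp_all
  ultimately have "gf2_lin_indep ((\<lambda>(l, s). Y l s) \<circ> map_prod id e) (UNIV \<times> J)"
    using assms(2) by (metis gf2_lin_indep_reindex)
  moreover have "(\<lambda>(l, s). Y l s) \<circ> map_prod id e = (\<lambda>(l, j). Y l (e j))"
    by (simp add: fun_eq_iff)
  ultimately show ?thesis
    by simp
qed

text \<open>In a vanishing sum, the part lying in the last row would be a sum of earlier rows.\<close>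
lemma gf2_lin_indep_rows:
  fixes Y :: "nat \<times> 'i \<Rightarrow> 'a set"
  assumes "finite I"
    and new: "\<And>L J. J \<subseteq> I \<Longrightarrow> J \<noteq> {} \<Longrightarrow> sd_sum (\<lambda>i. Y (L, i)) J \<notin> sd_span Y ({..<L} \<times> I)"
  shows "gf2_lin_indep Y (UNIV \<times> I)"
  unfolding gf2_lin_indep_iff_sums
proof (intro allI impI notI)
  fix F assume F: "F \<subseteq> UNIV \<times> I" "finite F" "F \<noteq> {}" and "sd_sum Y F = {}"
  define L where "L = Max (fst ` F)"
  define J where "J = {i. (L, i) \<in> F}"
  define F' where "F' = {p \<in> F. fst p < L}"
  have "\<forall>p \<in> F. fst p \<le> L"
    using F(2) by (simp add: L_def)
  then have F_split: "F = F' \<union> Pair L ` J"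
    by (force simp: F'_def J_def)
  have "J \<subseteq> I"
    using F(1) by (auto simp: J_def)
  then have "finite J"
    using assms(1) finite_subset by blast
  have "sd_sum Y F = symdiff (sd_sum Y F') (sd_sum Y (Pair L ` J))"
    unfolding sd_sum_conv_F
    by (subst F_split, rule symdiff_sum.union_disjoint) (use F(2) \<open>finite J\<close> in \<open>auto simp: F'_def\<close>)
  also have "sd_sum Y (Pair L ` J) = sd_sum (\<lambda>i. Y (L, i)) J"
    by (simp add: sd_sum_conv_F symdiff_sum.reindex inj_on_def comp_def)
  finally have "sd_sum Y F = symdiff (sd_sum Y F') (sd_sum (\<lambda>i. Y (L, i)) J)" .
  with \<open>sd_sum Y F = {}\<close> have "sd_sum (\<lambda>i. Y (L, i)) J = sd_sum Y F'"
    by (simp add: symdiff_eq_empty_iff)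
  moreover have "sd_sum Y F' \<in> sd_span Y ({..<L} \<times> I)"
    using F(1) unfolding sd_span_def by (auto simp: F'_def)
  moreover have "L \<in> fst ` F"
    unfolding L_def using F(2,3) by (intro Max_in) auto
  then have "J \<noteq> {}"
    by (force simp: J_def)
  ultimately show False
    using new[OF \<open>J \<subseteq> I\<close> \<open>J \<noteq> {}\<close>, of L] by simp
qed

text \<open>Take \<open>S\<close> of maximal size: for \<open>s \<notin> S\<close> some \<open>T \<subseteq> insert s S\<close> lies in \<open>K\<close>, and it
  must contain \<open>s\<close>. No closure property of \<open>K\<close> is needed.\<close>
lemma exists_basis_modulo:
  assumes "finite U" "{} \<in> K"
  obtains S where "S \<subseteq> U" "\<And>T. T \<subseteq> S \<Longrightarrow> T \<noteq> {} \<Longrightarrow> T \<notin> K"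
    "\<And>s. s \<in> U \<Longrightarrow> \<exists>T \<subseteq> S. symdiff {s} T \<in> K"
proof -
  define free where "free S \<longleftrightarrow> S \<subseteq> U \<and> (\<forall>T. T \<subseteq> S \<and> T \<noteq> {} \<longrightarrow> T \<notin> K)" for S
  have "free S \<Longrightarrow> card S < card U + 1" for S
    using assms(1) card_mono[of U S] by (simp add: free_def)
  then obtain S where "free S" and S_max: "\<And>S'. free S' \<Longrightarrow> card S' \<le> card S"
    using ex_has_greatest_nat[of free "{}" card "card U + 1"] by (auto simp: free_def)
  have "finite S"
    using \<open>free S\<close> assms(1) finite_subset by (auto simp: free_def)
  have "\<exists>T \<subseteq> S. symdiff {s} T \<in> K" if "s \<in> U" for s
  proof (cases "s \<in> S")
    case True
    then show ?thesis
      using assms(2) by (intro exI[of _ "{s}"]) (auto simp: symdiff_def)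
  next
    case False
    with \<open>finite S\<close> S_max[of "insert s S"] have "\<not> free (insert s S)"
      by auto
    then obtain T where T: "T \<subseteq> insert s S" "T \<noteq> {}" "T \<in> K"
      using \<open>free S\<close> \<open>s \<in> U\<close> by (auto simp: free_def)
    then have "s \<in> T"
      using \<open>free S\<close> by (auto simp: free_def)
    then have "symdiff {s} (T - {s}) = T"
      by (auto simp: symdiff_def)
    with T show ?thesis
      by (intro exI[of _ "T - {s}"]) auto
  qed
  with \<open>free S\<close> show thesis
    using that by (auto simp: free_def)
qed

text \<open>Take \<open>N\<close> on which the largest number of the \<open>z C\<close> are constant: an infinite fibre of
  another one would be a better choice of \<open>N\<close>.\<close>
lemma exists_infinite_constant_or_finite_fibres:
  fixes z :: "'c \<Rightarrow> nat \<Rightarrow> 'b"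
  assumes "finite \<C>"
  obtains N where "infinite N"
    "\<And>C. C \<in> \<C> \<Longrightarrow> (\<exists>v. \<forall>n \<in> N. z C n = v) \<or> (\<forall>v. finite {n \<in> N. z C n = v})"
proof -
  define const where "const N = {C \<in> \<C>. \<exists>v. \<forall>n \<in> N. z C n = v}" for N :: "nat set"
  have "card (const N) < card \<C> + 1" for N
    using assms card_mono[of \<C> "const N"] by (auto simp: const_def)
  then obtain N where "infinite N" and N_max: "\<And>M. infinite M \<Longrightarrow> card (const M) \<le> card (const N)"
    using ex_has_greatest_nat[of infinite UNIV "\<lambda>N. card (const N)" "card \<C> + 1"] by auto
  have fibres: "finite {n \<in> N. z C n = v}" if "C \<in> \<C>" "C \<notin> const N" for C v
  proof (rule ccontr)
    let ?M = "{n \<in> N. z C n = v}"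
    assume "infinite ?M"
    have "const N \<subseteq> const ?M" "C \<in> const ?M"
      using that(1) unfolding const_def by blast+
    then have "const N \<subset> const ?M"
      using that(2) by blast
    then have "card (const N) < card (const ?M)"
      using assms by (intro psubset_card_mono) (auto simp: const_def)
    with N_max[OF \<open>infinite ?M\<close>] show False
      by simp
  qed
  show thesis
  proof (rule that[OF \<open>infinite N\<close>])
    fix C assume "C \<in> \<C>"
    then show "(\<exists>v. \<forall>n \<in> N. z C n = v) \<or> (\<forall>v. finite {n \<in> N. z C n = v})"
      using fibres[of C] by (auto simp: const_def)
  qed
qed

lemma exists_avoiding_finite_fibres:
  fixes m :: nat
  assumes "infinite N" "finite \<T>" "finite A"
    and "\<And>T v. T \<in> \<T> \<Longrightarrow> finite {n \<in> N. z T n = v}"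
  shows "\<exists>n \<in> N. m < n \<and> (\<forall>T \<in> \<T>. z T n \<notin> A)"
proof -
  define B where "B = (\<Union>T \<in> \<T>. \<Union>v \<in> A. {n \<in> N. z T n = v})"
  have "finite (B \<union> {..m})"
    unfolding B_def using assms(2-4) by simp
  then have "infinite (N - (B \<union> {..m}))"
    using assms(1) by (rule Diff_infinite_finite)
  then obtain n where "n \<in> N" "n \<notin> B" "n \<notin> {..m}"
    using infinite_imp_nonempty by blast
  then show ?thesis
    by (intro bexI[of _ n]) (auto simp: B_def)
qed

lemma exists_independent_subsequence:
  fixes x :: "nat \<Rightarrow> 's \<Rightarrow> 'a set"
  assumes "infinite N" "finite S"
    and fibres: "\<And>T v. T \<subseteq> S \<Longrightarrow> T \<noteq> {} \<Longrightarrow> finite {n \<in> N. sd_sum (x n) T = v}"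
  obtains nl :: "nat \<Rightarrow> nat" where "strict_mono nl" "range nl \<subseteq> N"
    "gf2_lin_indep (\<lambda>(l, s). x (nl l) s) (UNIV \<times> S)"
proof -
  define span where "span m = sd_span (\<lambda>(j, s). x j s) ({..m} \<times> S)" for m
  define fresh where "fresh m n \<longleftrightarrow> n \<in> N \<and> m < n \<and>
    (\<forall>T \<in> {T. T \<subseteq> S \<and> T \<noteq> {}}. sd_sum (x n) T \<notin> span m)" for m n
  have "\<exists>n. fresh m n" for m
    unfolding fresh_def Bex_def[symmetric] using assms(1,2) fibres
    by (intro exists_avoiding_finite_fibres[where z = "\<lambda>T n. sd_sum (x n) T"])
      (auto simp: span_def finite_sd_span)
  then obtain g where g: "\<And>m. fresh m (g m)"
    by metis
  define f where "f l = (g ^^ l) 0" for l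
  have f_Suc: "f (Suc l) = g (f l)" for l
    by (simp add: f_def)
  have "strict_mono f"
    unfolding strict_mono_Suc_iff f_Suc using g by (simp add: fresh_def)
  define nl where "nl l = f (Suc l)" for l
  have "strict_mono nl"
    using \<open>strict_mono f\<close> by (simp add: strict_mono_def nl_def)
  moreover have "range nl \<subseteq> N"
    using g by (auto simp: nl_def f_Suc fresh_def)
  moreover have "gf2_lin_indep (\<lambda>(l, s). x (nl l) s) (UNIV \<times> S)"
  proof -
    let ?Y = "(\<lambda>(j, s). x j s) \<circ> map_prod nl id"
    have "?Y = (\<lambda>(l, s). x (nl l) s)"
      by (simp add: fun_eq_iff)
    moreover have "gf2_lin_indep ?Y (UNIV \<times> S)"
    proof (rule gf2_lin_indep_rows[OF \<open>finite S\<close>])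
      fix L J assume "J \<subseteq> S" "J \<noteq> {}"
      have "sd_span ((\<lambda>(j, s). x j s) \<circ> map_prod nl id) ({..<L} \<times> S) \<subseteq> span (f L)"
        unfolding span_def
      proof (rule sd_span_reindex_subset)
        show "inj_on (map_prod nl id) ({..<L} \<times> S)"
          using strict_mono_imp_inj_on[OF \<open>strict_mono nl\<close>] by (auto intro: map_prod_inj_on inj_on_subset)
        show "map_prod nl id ` ({..<L} \<times> S) \<subseteq> {..f L} \<times> S"
          using \<open>strict_mono f\<close> by (auto simp: nl_def strict_mono_less_eq)
      qed
      moreover have "sd_sum (x (nl L)) J \<notin> span (f L)"
        using g[of "f L"] \<open>J \<subseteq> S\<close> \<open>J \<noteq> {}\<close> by (simp add: nl_def f_Suc fresh_def)
      ultimately show "sd_sum (\<lambda>i. ((\<lambda>(j, s). x j s) \<circ> map_prod nl id) (L, i)) J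
          \<notin> sd_span ((\<lambda>(j, s). x j s) \<circ> map_prod nl id) ({..<L} \<times> S)"
        by auto
    qed
    ultimately show ?thesis
      by simp
  qed
  ultimately show thesis
    by (rule that)
qed

lemma exists_affine_decomposition:
  fixes x :: "nat \<Rightarrow> 's \<Rightarrow> 'a set"
  assumes "finite I" and closed: "\<And>n s. s \<in> I \<Longrightarrow> finite (x n s) \<and> x n s \<subseteq> X"
  obtains N S T d where "infinite N" "S \<subseteq> I"
    "\<And>U v. U \<subseteq> S \<Longrightarrow> U \<noteq> {} \<Longrightarrow> finite {n \<in> N. sd_sum (x n) U = v}"
    "\<And>s. s \<in> I \<Longrightarrow> T s \<subseteq> S" "\<And>s. s \<in> I \<Longrightarrow> finite (d s) \<and> d s \<subseteq> X"
    "\<And>s n. s \<in> I \<Longrightarrow> n \<in> N \<Longrightarrow> x n s = symdiff (sd_sum (x n) (T s)) (d s)"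
proof -
  have "finite (Pow I)"
    using \<open>finite I\<close> by simp
  then obtain N where "infinite N" and dichotomy: "\<And>C. C \<in> Pow I \<Longrightarrow>
      (\<exists>v. \<forall>n \<in> N. sd_sum (x n) C = v) \<or> (\<forall>v. finite {n \<in> N. sd_sum (x n) C = v})"
    by (rule exists_infinite_constant_or_finite_fibres[where z = "\<lambda>C n. sd_sum (x n) C"]) (rule that)
  define K where "K = {C. \<exists>v. \<forall>n \<in> N. sd_sum (x n) C = v}"
  have "{} \<in> K"
    by (simp add: K_def sd_sum_conv_F)
  then obtain S where "S \<subseteq> I" and S_free: "\<And>U. U \<subseteq> S \<Longrightarrow> U \<noteq> {} \<Longrightarrow> U \<notin> K"
    and S_spans: "\<And>s. s \<in> I \<Longrightarrow> \<exists>T \<subseteq> S. symdiff {s} T \<in> K"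
    by (rule exists_basis_modulo[OF \<open>finite I\<close>]) (rule that)
  have fibres: "finite {n \<in> N. sd_sum (x n) U = v}" if "U \<subseteq> S" "U \<noteq> {}" for U v
  proof -
    have "U \<in> Pow I"
      using that(1) \<open>S \<subseteq> I\<close> by auto
    then show ?thesis
      using dichotomy S_free[OF that] unfolding K_def by blast
  qed
  have "\<forall>s \<in> I. \<exists>T. T \<subseteq> S \<and> symdiff {s} T \<in> K"
    by (intro ballI S_spans)
  from bchoice[OF this] obtain T
    where T: "\<And>s. s \<in> I \<Longrightarrow> T s \<subseteq> S" and T_K: "\<And>s. s \<in> I \<Longrightarrow> symdiff {s} (T s) \<in> K"
    by blast
  have "\<forall>s \<in> I. \<exists>v. \<forall>n \<in> N. sd_sum (x n) (symdiff {s} (T s)) = v"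
    using T_K by (simp add: K_def)
  from bchoice[OF this] obtain d
    where d: "\<And>s n. s \<in> I \<Longrightarrow> n \<in> N \<Longrightarrow> sd_sum (x n) (symdiff {s} (T s)) = d s"
    by blast
  have "finite S"
    using \<open>S \<subseteq> I\<close> \<open>finite I\<close> finite_subset by blast
  have decomp: "x n s = symdiff (sd_sum (x n) (T s)) (d s)" if "s \<in> I" "n \<in> N" for s n
  proof -
    have "finite (T s)"
      using T[OF that(1)] \<open>finite S\<close> finite_subset by blast
    then have "d s = symdiff (x n s) (sd_sum (x n) (T s))"
      using d[OF that] sd_sum_symdiff[of "{s}" "T s" "x n"] by (simp add: sd_sum_conv_F)
    then show ?thesis
      by (auto simp: symdiff_def)
  qed
  obtain n\<^sub>0 where "n\<^sub>0 \<in> N"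
    using infinite_imp_nonempty[OF \<open>infinite N\<close>] by blast
  have d_closed: "finite (d s) \<and> d s \<subseteq> X" if "s \<in> I" for s
  proof -
    have "symdiff {s} (T s) \<subseteq> I"
      using that T[OF that] \<open>S \<subseteq> I\<close> by (auto simp: symdiff_def)
    then have "finite (sd_sum (x n\<^sub>0) (symdiff {s} (T s))) \<and> sd_sum (x n\<^sub>0) (symdiff {s} (T s)) \<subseteq> X"
      using closed by (intro sd_sum_finite_subset) blast
    then show ?thesis
      using d[OF that \<open>n\<^sub>0 \<in> N\<close>] by simp
  qed
  show thesis
    using that[OF \<open>infinite N\<close> \<open>S \<subseteq> I\<close> fibres T d_closed decomp] .
qed

lemma exists_independent_affine_decomposition:
  fixes x :: "nat \<Rightarrow> 's \<Rightarrow> 'a set"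
  assumes "finite I" and closed: "\<And>n s. s \<in> I \<Longrightarrow> finite (x n s) \<and> x n s \<subseteq> X"
  obtains nl :: "nat \<Rightarrow> nat" and S T d where "strict_mono nl" "S \<subseteq> I"
    "\<And>s. s \<in> I \<Longrightarrow> T s \<subseteq> S" "\<And>s. s \<in> I \<Longrightarrow> finite (d s) \<and> d s \<subseteq> X"
    "\<And>l s. s \<in> I \<Longrightarrow> x (nl l) s = symdiff (sd_sum (x (nl l)) (T s)) (d s)"
    "gf2_lin_indep (\<lambda>(l, s). x (nl l) s) (UNIV \<times> S)"
proof -
  obtain N S T d where "infinite N" "S \<subseteq> I"
    and fibres: "\<And>U v. U \<subseteq> S \<Longrightarrow> U \<noteq> {} \<Longrightarrow> finite {n \<in> N. sd_sum (x n) U = v}"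
    and T: "\<And>s. s \<in> I \<Longrightarrow> T s \<subseteq> S" and d: "\<And>s. s \<in> I \<Longrightarrow> finite (d s) \<and> d s \<subseteq> X"
    and decomp: "\<And>s n. s \<in> I \<Longrightarrow> n \<in> N \<Longrightarrow> x n s = symdiff (sd_sum (x n) (T s)) (d s)"
    by (rule exists_affine_decomposition[where x = x and X = X, OF \<open>finite I\<close>]) (erule closed, rule that)
  have "finite S"
    using \<open>S \<subseteq> I\<close> \<open>finite I\<close> finite_subset by blast
  obtain nl :: "nat \<Rightarrow> nat" where "strict_mono nl" "range nl \<subseteq> N"
    and "gf2_lin_indep (\<lambda>(l, s). x (nl l) s) (UNIV \<times> S)"
    using \<open>infinite N\<close> \<open>finite S\<close> fibres by (rule exists_independent_subsequence)
  moreover have "nl l \<in> N" for l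
    using \<open>range nl \<subseteq> N\<close> by blast
  ultimately show thesis
    using \<open>S \<subseteq> I\<close> T d decomp by (intro that[of nl S T d]) simp_all
qed

theorem mainTheorem3:
  fixes X :: "'a set" and k :: nat and x :: "nat \<Rightarrow> nat \<Rightarrow> 'a set"
  assumes "infinite X" and "k > 0"
    and "\<And>n s. s < k \<Longrightarrow> finite (x n s) \<and> x n s \<subseteq> X"
  shows "\<exists>(d :: nat \<Rightarrow> 'a set) (nl :: nat \<Rightarrow> nat) (t :: nat) (y :: nat \<Rightarrow> nat \<Rightarrow> 'a set)
            (P :: nat \<Rightarrow> nat \<Rightarrow> bool).
     (\<forall>s<k. finite (d s) \<and> d s \<subseteq> X) \<and>
     strict_mono nl \<and>
     t \<le> k \<and>
     (\<forall>l i. i < t \<longrightarrow> finite (y l i) \<and> y l i \<subseteq> X) \<and>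
     (\<forall>l s. s < k \<longrightarrow>
        x (nl l) s = symdiff (sd_sum (\<lambda>i. if P s i then y l i else {}) {..<t}) (d s)) \<and>
     gf2_lin_indep (\<lambda>(l, i). y l i) (UNIV \<times> {..<t})"
proof -
  have closed: "\<And>n s. s \<in> {..<k} \<Longrightarrow> finite (x n s) \<and> x n s \<subseteq> X"
    using assms(3) by simp
  obtain nl :: "nat \<Rightarrow> nat" and S T d where "strict_mono nl" "S \<subseteq> {..<k}"
    and T: "\<And>s. s \<in> {..<k} \<Longrightarrow> T s \<subseteq> S" and d: "\<And>s. s \<in> {..<k} \<Longrightarrow> finite (d s) \<and> d s \<subseteq> X"
    and decomp: "\<And>l s. s \<in> {..<k} \<Longrightarrow> x (nl l) s = symdiff (sd_sum (x (nl l)) (T s)) (d s)"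
    and indep: "gf2_lin_indep (\<lambda>(l, s). x (nl l) s) (UNIV \<times> S)"
    by (rule exists_independent_affine_decomposition[where I = "{..<k}" and x = x and X = X,
          OF finite_lessThan])
      (erule closed, rule that)
  have "finite S"
    using \<open>S \<subseteq> {..<k}\<close> finite_subset by blast
  then obtain e where e: "bij_betw e {..<card S} S"
    using ex_bij_betw_nat_finite by (auto simp: atLeast0LessThan)
  show ?thesis
  proof (intro exI[of _ d] exI[of _ nl] exI[of _ "card S"] exI[of _ "\<lambda>l i. x (nl l) (e i)"]
      exI[of _ "\<lambda>s i. e i \<in> T s"] conjI allI impI)
    show "card S \<le> k"
      using card_mono[OF finite_lessThan \<open>S \<subseteq> {..<k}\<close>] by simp
    show "finite (x (nl l) (e i))" "x (nl l) (e i) \<subseteq> X" if "i < card S" for l i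
      using closed bij_betwE[OF e] that \<open>S \<subseteq> {..<k}\<close> by (meson lessThan_iff subsetD)+
    show "x (nl l) s = symdiff (sd_sum (\<lambda>i. if e i \<in> T s then x (nl l) (e i) else {}) {..<card S}) (d s)"
      if "s < k" for l s
      using that decomp sd_sum_reindex_bij_filter[OF e T finite_lessThan, of s "x (nl l)"] by simp
  qed (use d \<open>strict_mono nl\<close> gf2_lin_indep_bij_columns[OF e indep] in simp_all)
qed

end
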